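(* The Minkowski sum $X+I$ of a closed $\ell_1$-convex set $X\subseteq\mathbb{R}^n$ and an interval $I\subseteq\mathbb{R}^n$ is $\ell_1$-convex.
   Context: A subset $X\subseteq\mathbb{R}^n$ is $\ell_1$-convex if for all $x,x'\in X$, with $D=\sum_i|x_i-x'_i|$, there is $\gamma\colon[0,D]\to X$ with $\gamma(0)=x,\gamma(D)=x'$ and $\sum_i|\gamma_i(t)-\gamma_i(t')|=|t-t'|$ for all $t,t'$. An interval in $\mathbb{R}^n$ is a set $\prod_{i=1}^n I_i$ with each $I_i\subseteq\mathbb{R}$ a (possibly empty, possibly unbounded) interval. *)

theory Defs
  imports "HOL-Analysis.Analysis"
begin

definition l1dist :: "real^'n \<Rightarrow> real^'n \<Rightarrow> real" where
  "l1dist x y = (\<Sum>i\<in>UNIV. \<bar>x $ i - y $ i\<bar>)"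

definition l1_convex :: "(real^'n) set \<Rightarrow> bool" where
  "l1_convex X \<longleftrightarrow>
     (\<forall>x\<in>X. \<forall>x'\<in>X. \<exists>\<gamma> :: real \<Rightarrow> real^'n.
        \<gamma> 0 = x \<and> \<gamma> (l1dist x x') = x' \<and>
        (\<forall>t\<in>{0..l1dist x x'}. \<gamma> t \<in> X) \<and>
        (\<forall>t\<in>{0..l1dist x x'}. \<forall>t'\<in>{0..l1dist x x'}. l1dist (\<gamma> t) (\<gamma> t') = \<bar>t - t'\<bar>))"

definition box_interval :: "(real^'n) set \<Rightarrow> bool" where
  "box_interval S \<longleftrightarrow>
     (\<exists>I :: 'n \<Rightarrow> real set. (\<forall>i. is_interval (I i)) \<and> S = {x. \<forall>i. x $ i \<in> I i})"

definition minkowski_sum :: "(real^'n) set \<Rightarrow> (real^'n) set \<Rightarrow> (real^'n) set" where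
  "minkowski_sum A B = {a + b | a b. a \<in> A \<and> b \<in> B}"

end

theory Submission
  imports Defs
begin

text \<open>Join \<open>x, x' \<in> X\<close> by an l1-geodesic \<open>\<gamma>\<close> in \<open>X\<close>; its coordinates are monotone. To go from
  \<open>x + b\<close> to \<open>x' + b'\<close>, follow \<open>\<gamma>\<close> in the first summand while, coordinatewise, the second
  summand moves the opposite way inside the segment between \<open>b\<^sub>i\<close> and \<open>b'\<^sub>i\<close> for as long as it can,
  then move the second summand straight to \<open>b'\<close>. Since an interval is a product of segments, this
  path stays in \<open>X + I\<close>, and each of its coordinates is monotone. A continuous path with monotone
  coordinates, reparametrised by l1-distance from its starting point, is an l1-geodesic.\<close>

definition l1_geodesic :: "(real^'n) set \<Rightarrow> (real \<Rightarrow> real^'n) \<Rightarrow> real^'n \<Rightarrow> real^'n \<Rightarrow> bool" where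
  "l1_geodesic Y \<gamma> x x' \<longleftrightarrow>
     \<gamma> 0 = x \<and> \<gamma> (l1dist x x') = x' \<and> (\<forall>t\<in>{0..l1dist x x'}. \<gamma> t \<in> Y) \<and>
     (\<forall>t\<in>{0..l1dist x x'}. \<forall>t'\<in>{0..l1dist x x'}. l1dist (\<gamma> t) (\<gamma> t') = \<bar>t - t'\<bar>)"

lemma l1_convex_iff_l1_geodesic:
  "l1_convex X \<longleftrightarrow> (\<forall>x\<in>X. \<forall>x'\<in>X. \<exists>\<gamma>. l1_geodesic X \<gamma> x x')"
  unfolding l1_convex_def l1_geodesic_def ..

lemma l1dist_commute: "l1dist x y = l1dist y x"
  unfolding l1dist_def by (simp add: abs_minus_commute)

lemma l1dist_nonneg: "0 \<le> l1dist x y"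
  unfolding l1dist_def by (simp add: sum_nonneg)

lemma l1dist_eq_0_iff: "l1dist x y = 0 \<longleftrightarrow> x = y"
  unfolding l1dist_def by (auto simp: sum_nonneg_eq_0_iff vec_eq_iff)

lemma dist_le_l1dist: "dist x y \<le> l1dist x y"
  unfolding dist_norm l1dist_def using norm_le_l1_cart[of "x - y"] by simp

lemma l1dist_add_eq_iff:
  "l1dist p q + l1dist q r = l1dist p r \<longleftrightarrow> (\<forall>i. \<bar>p$i - q$i\<bar> + \<bar>q$i - r$i\<bar> = \<bar>p$i - r$i\<bar>)"
proof -
  have "l1dist p q + l1dist q r - l1dist p r = (\<Sum>i\<in>UNIV. \<bar>p$i - q$i\<bar> + \<bar>q$i - r$i\<bar> - \<bar>p$i - r$i\<bar>)"
    unfolding l1dist_def by (simp add: sum.distrib sum_subtractf)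
  moreover have "(\<Sum>i\<in>UNIV. \<bar>p$i - q$i\<bar> + \<bar>q$i - r$i\<bar> - \<bar>p$i - r$i\<bar>) = 0 \<longleftrightarrow>
      (\<forall>i. \<bar>p$i - q$i\<bar> + \<bar>q$i - r$i\<bar> - \<bar>p$i - r$i\<bar> = 0)"
    by (subst sum_nonneg_eq_0_iff) auto
  ultimately show ?thesis by auto
qed

definition monotone_coords :: "real set \<Rightarrow> (real \<Rightarrow> real^'n) \<Rightarrow> bool" where
  "monotone_coords S p \<longleftrightarrow> (\<forall>i. mono_on S (\<lambda>s. p s $ i) \<or> antimono_on S (\<lambda>s. p s $ i))"

lemma monotone_coords_cong:
  "monotone_coords S p \<Longrightarrow> (\<And>s. s \<in> S \<Longrightarrow> q s = p s) \<Longrightarrow> monotone_coords S q"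
  unfolding monotone_coords_def monotone_on_def by simp

lemma l1dist_add_monotone_coords:
  assumes "monotone_coords S p" "s \<in> S" "t \<in> S" "u \<in> S" "s \<le> t" "t \<le> u"
  shows "l1dist (p s) (p t) + l1dist (p t) (p u) = l1dist (p s) (p u)"
  unfolding l1dist_add_eq_iff
proof
  fix i
  from assms(1) consider "mono_on S (\<lambda>s. p s $ i)" | "antimono_on S (\<lambda>s. p s $ i)"
    unfolding monotone_coords_def by blast
  then show "\<bar>p s $ i - p t $ i\<bar> + \<bar>p t $ i - p u $ i\<bar> = \<bar>p s $ i - p u $ i\<bar>"
  proof cases
    case 1
    then show ?thesis using monotone_onD[OF 1, of s t] monotone_onD[OF 1, of t u] assms by auto
  next
    case 2
    then show ?thesis using monotone_onD[OF 2, of s t] monotone_onD[OF 2, of t u] assms by auto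
  qed
qed

lemma mono_or_antimono_if_receding:
  fixes f :: "real \<Rightarrow> real"
  assumes "\<And>t t'. a \<le> t \<Longrightarrow> t \<le> t' \<Longrightarrow> t' \<le> b \<Longrightarrow> \<bar>f a - f t\<bar> + \<bar>f t - f t'\<bar> = \<bar>f a - f t'\<bar>"
  shows "mono_on {a..b} f \<or> antimono_on {a..b} f"
proof (cases "f a \<le> f b")
  case True
  have "f t \<le> f t'" if "a \<le> t" "t \<le> t'" "t' \<le> b" for t t'
    using assms[OF that] assms[of t' b] that True by linarith
  then show ?thesis by (auto intro: monotone_onI)
next
  case False
  have "f t' \<le> f t" if "a \<le> t" "t \<le> t'" "t' \<le> b" for t t'
    using assms[OF that] assms[of t' b] that False by linarith
  then show ?thesis by (auto intro: monotone_onI)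
qed

lemma monotone_coords_l1_isometry:
  assumes "\<And>t t'. t \<in> {a..b} \<Longrightarrow> t' \<in> {a..b} \<Longrightarrow> l1dist (\<gamma> t) (\<gamma> t') = \<bar>t - t'\<bar>"
  shows "monotone_coords {a..b} \<gamma>"
  unfolding monotone_coords_def
proof
  fix i
  have "l1dist (\<gamma> a) (\<gamma> t) + l1dist (\<gamma> t) (\<gamma> t') = l1dist (\<gamma> a) (\<gamma> t')"
    if "a \<le> t" "t \<le> t'" "t' \<le> b" for t t'
    using that by (simp add: assms)
  then show "mono_on {a..b} (\<lambda>s. \<gamma> s $ i) \<or> antimono_on {a..b} (\<lambda>s. \<gamma> s $ i)"
    by (intro mono_or_antimono_if_receding) (simp add: l1dist_add_eq_iff)
qed

lemma continuous_on_l1_isometry: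
  assumes "\<And>t t'. t \<in> S \<Longrightarrow> t' \<in> S \<Longrightarrow> l1dist (\<gamma> t) (\<gamma> t') = \<bar>t - t'\<bar>"
  shows "continuous_on S \<gamma>"
proof (rule lipschitz_on_continuous_on)
  show "1-lipschitz_on S \<gamma>"
  proof (rule lipschitz_onI)
    fix t t' assume "t \<in> S" "t' \<in> S"
    then show "dist (\<gamma> t) (\<gamma> t') \<le> 1 * dist t t'"
      using dist_le_l1dist[of "\<gamma> t" "\<gamma> t'"] by (simp add: assms dist_real_def)
  qed simp
qed

text \<open>The geodesic is \<open>p \<circ> \<sigma>\<close>, where \<open>\<sigma>\<close> inverts \<open>s \<mapsto> l1dist (p 0) (p s)\<close> by the intermediate
  value theorem.\<close>
lemma l1_geodesic_monotone_path:
  assumes "0 \<le> S" "continuous_on {0..S} p" "monotone_coords {0..S} p" "p ` {0..S} \<subseteq> Y"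
  shows "\<exists>\<gamma>. l1_geodesic Y \<gamma> (p 0) (p S)"
proof -
  define L where "L s = l1dist (p 0) (p s)" for s
  define D where "D = l1dist (p 0) (p S)"
  have dist_L: "l1dist (p s) (p s') = \<bar>L s - L s'\<bar>" if "s \<in> {0..S}" "s' \<in> {0..S}" for s s'
  proof (cases "s \<le> s'")
    case True
    then show ?thesis
      using l1dist_add_monotone_coords[OF assms(3), of 0 s s'] that l1dist_nonneg[of "p s" "p s'"]
      by (auto simp: L_def)
  next
    case False
    then show ?thesis
      using l1dist_add_monotone_coords[OF assms(3), of 0 s' s] that l1dist_nonneg[of "p s" "p s'"]
      by (auto simp: L_def l1dist_commute)
  qed
  have "continuous_on {0..S} L"
    unfolding L_def l1dist_def by (intro continuous_intros assms(2))
  moreover have "L 0 = 0" "L S = D"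
    by (simp_all add: L_def D_def l1dist_eq_0_iff)
  ultimately have "\<exists>s\<in>{0..S}. L s = t" if "t \<in> {0..D}" for t
    using IVT'[of L 0 t S] that assms(1) by auto
  then obtain \<sigma> where \<sigma>: "\<And>t. t \<in> {0..D} \<Longrightarrow> \<sigma> t \<in> {0..S} \<and> L (\<sigma> t) = t"
    by metis
  have "D \<ge> 0" by (simp add: D_def l1dist_nonneg)
  have "l1_geodesic Y (p \<circ> \<sigma>) (p 0) (p S)"
    unfolding l1_geodesic_def D_def[symmetric]
  proof (intro conjI ballI)
    show "(p \<circ> \<sigma>) 0 = p 0"
      using dist_L[of 0 "\<sigma> 0"] \<sigma>[of 0] \<open>D \<ge> 0\<close> \<open>L 0 = 0\<close> assms(1) by (simp add: l1dist_eq_0_iff)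
    show "(p \<circ> \<sigma>) D = p S"
      using dist_L[of S "\<sigma> D"] \<sigma>[of D] \<open>D \<ge> 0\<close> \<open>L S = D\<close> assms(1) by (simp add: l1dist_eq_0_iff)
    show "(p \<circ> \<sigma>) t \<in> Y" if "t \<in> {0..D}" for t
      using \<sigma>[OF that] assms(4) by auto
    show "l1dist ((p \<circ> \<sigma>) t) ((p \<circ> \<sigma>) t') = \<bar>t - t'\<bar>" if "t \<in> {0..D}" "t' \<in> {0..D}" for t t'
      using dist_L[of "\<sigma> t" "\<sigma> t'"] \<sigma>[OF that(1)] \<sigma>[OF that(2)] by simp
  qed
  then show ?thesis by blast
qed

lemma mono_on_glue:
  fixes f :: "real \<Rightarrow> real"
  assumes "mono_on {a..m} f" "mono_on {m..b} f"
  shows "mono_on {a..b} f"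
proof (rule monotone_onI)
  fix t t' assume "t \<in> {a..b}" "t' \<in> {a..b}" "t \<le> t'"
  then show "f t \<le> f t'"
    using monotone_onD[OF assms(1), of t t'] monotone_onD[OF assms(2), of t t']
      monotone_onD[OF assms(1), of t m] monotone_onD[OF assms(2), of m t']
    by (cases "t' \<le> m"; cases "m \<le> t") auto
qed

lemma mono_on_if_antimono_on_endpoints:
  fixes f :: "real \<Rightarrow> real"
  assumes "antimono_on {a..b} f" "f a \<le> f b"
  shows "mono_on {a..b} f"
proof (rule monotone_onI)
  fix t t' assume "t \<in> {a..b}" "t' \<in> {a..b}" "t \<le> t'"
  then show "f t \<le> f t'"
    using monotone_onD[OF assms(1), of a t] monotone_onD[OF assms(1), of t' b] assms(2) by auto
qed

lemma antimono_on_iff_mono_on_uminus: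
  fixes f :: "real \<Rightarrow> real"
  shows "antimono_on S f \<longleftrightarrow> mono_on S (\<lambda>s. - f s)"
  by (simp add: monotone_on_def)

lemma mono_or_antimono_glue:
  fixes f :: "real \<Rightarrow> real"
  assumes "mono_on {a..m} f \<or> antimono_on {a..m} f" "mono_on {m..b} f \<or> antimono_on {m..b} f"
    and "a \<le> m" "m \<le> b" and "\<bar>f a - f m\<bar> + \<bar>f m - f b\<bar> = \<bar>f a - f b\<bar>"
  shows "mono_on {a..b} f \<or> antimono_on {a..b} f"
proof -
  have glue: "mono_on {a..b} g"
    if "mono_on {a..m} g \<or> antimono_on {a..m} g" "mono_on {m..b} g \<or> antimono_on {m..b} g"
      "g a \<le> g m" "g m \<le> g b" for g :: "real \<Rightarrow> real"
    using that mono_on_if_antimono_on_endpoints[of a m g] mono_on_if_antimono_on_endpoints[of m b g]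
    by (blast intro: mono_on_glue)
  show ?thesis
  proof (cases "f a \<le> f b")
    case True
    then show ?thesis using glue[of f] assms by (auto simp: abs_if split: if_splits)
  next
    case False
    then have "mono_on {a..b} (\<lambda>s. - f s)"
      using glue[of "\<lambda>s. - f s"] assms by (auto simp: antimono_on_iff_mono_on_uminus abs_if split: if_splits)
    then show ?thesis by (simp add: antimono_on_iff_mono_on_uminus)
  qed
qed

lemma monotone_coords_glue:
  assumes "monotone_coords {a..m} p" "monotone_coords {m..b} p" "a \<le> m" "m \<le> b"
    and "l1dist (p a) (p m) + l1dist (p m) (p b) = l1dist (p a) (p b)"
  shows "monotone_coords {a..b} p"
  using assms mono_or_antimono_glue[of a m "\<lambda>s. p s $ _" b]
  unfolding monotone_coords_def l1dist_add_eq_iff by blast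

lemma monotone_coords_mono_comp:
  assumes "monotone_coords S p" "\<And>i. mono (w i)"
  shows "monotone_coords S (\<lambda>s. \<chi> i. w i (p s $ i))"
  unfolding monotone_coords_def
proof
  fix i
  from assms(1) consider "mono_on S (\<lambda>s. p s $ i)" | "antimono_on S (\<lambda>s. p s $ i)"
    unfolding monotone_coords_def by blast
  then show "mono_on S (\<lambda>s. (\<chi> i. w i (p s $ i)) $ i) \<or> antimono_on S (\<lambda>s. (\<chi> i. w i (p s $ i)) $ i)"
    by cases (auto intro!: monotone_onI monoD[OF assms(2)] dest: monotone_onD)
qed

lemma monotone_coords_ray:
  assumes "mono_on S h"
  shows "monotone_coords S (\<lambda>s. a + h s *\<^sub>R v)"
  unfolding monotone_coords_def
proof
  fix i
  show "mono_on S (\<lambda>s. (a + h s *\<^sub>R v) $ i) \<or> antimono_on S (\<lambda>s. (a + h s *\<^sub>R v) $ i)"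
  proof (cases "v $ i \<ge> 0")
    case True
    then show ?thesis
      using monotone_onD[OF assms] by (auto intro!: monotone_onI mult_right_mono)
  next
    case False
    then show ?thesis
      using monotone_onD[OF assms] by (auto intro!: monotone_onI mult_right_mono_neg)
  qed
qed

definition seg_clamp :: "real \<Rightarrow> real \<Rightarrow> real \<Rightarrow> real" where
  "seg_clamp a b v = max (min a b) (min (max a b) v)"

lemma seg_clamp_in_closed_segment: "seg_clamp a b v \<in> closed_segment a b"
  unfolding seg_clamp_def by (auto simp: closed_segment_eq_real_ivl)

lemma seg_clamp_left [simp]: "seg_clamp a b a = a"
  unfolding seg_clamp_def by auto

lemma seg_clamp_between: "\<bar>v - seg_clamp a b v\<bar> + \<bar>seg_clamp a b v - b\<bar> = \<bar>v - b\<bar>"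
  unfolding seg_clamp_def by (simp add: max_def min_def abs_if)

text \<open>Holds because \<open>seg_clamp a b\<close> is non-decreasing and \<open>1\<close>-Lipschitz.\<close>
lemma mono_add_seg_clamp: "mono (\<lambda>u. u + seg_clamp a b (c - u))"
  unfolding seg_clamp_def by (rule monoI) auto

lemma box_interval_closed_segment:
  assumes "box_interval I" "b \<in> I" "b' \<in> I"
    and "\<And>i. z $ i \<in> closed_segment (b $ i) (b' $ i)"
  shows "z \<in> I"
proof -
  obtain J where J: "\<And>i. is_interval (J i)" "I = {x. \<forall>i. x $ i \<in> J i}"
    using assms(1) unfolding box_interval_def by blast
  have "z $ i \<in> J i" for i
  proof -
    have "b $ i \<in> J i" "b' $ i \<in> J i" using assms(2,3) J(2) by auto
    then show ?thesis
      using assms(4)[of i] closed_segment_subset is_interval_convex_1 J(1) by blast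
  qed
  then show ?thesis using J(2) by blast
qed

lemma box_interval_towards_endpoint:
  assumes "box_interval I" "b \<in> I" "b' \<in> I"
    and "\<And>i. u $ i \<in> closed_segment (b $ i) (b' $ i)" "0 \<le> \<theta>" "\<theta> \<le> 1"
  shows "u + \<theta> *\<^sub>R (b' - u) \<in> I"
proof (rule box_interval_closed_segment[OF assms(1-3)])
  fix i
  have "(u + \<theta> *\<^sub>R (b' - u)) $ i \<in> closed_segment (u $ i) (b' $ i)"
    unfolding in_segment using assms(5,6) by (intro exI[of _ \<theta>]) (simp add: algebra_simps)
  moreover have "closed_segment (u $ i) (b' $ i) \<subseteq> closed_segment (b $ i) (b' $ i)"
    using assms(4) by (simp add: closed_segment_subset)
  ultimately show "(u + \<theta> *\<^sub>R (b' - u)) $ i \<in> closed_segment (b $ i) (b' $ i)"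
    by blast
qed

lemma l1_geodesic_minkowski_sum_box:
  assumes "l1_geodesic X \<gamma> x x'" "box_interval I" "b \<in> I" "b' \<in> I"
  shows "\<exists>\<delta>. l1_geodesic (minkowski_sum X I) \<delta> (x + b) (x' + b')"
proof -
  define D where "D = l1dist x x'"
  define g where "g s = \<gamma> (min s D)" for s
  define c where "c s = (\<chi> i. seg_clamp (b $ i) (b' $ i) (b $ i + x $ i - g s $ i))" for s
  define h where "h s = max 0 (min 1 (s - D))" for s
  define p where "p s = g s + (c s + h s *\<^sub>R (b' - c s))" for s
  have "0 \<le> D" by (simp add: D_def l1dist_nonneg)
  have \<gamma>: "\<gamma> 0 = x" "\<gamma> D = x'" "\<And>t. t \<in> {0..D} \<Longrightarrow> \<gamma> t \<in> X"
    "\<And>t t'. t \<in> {0..D} \<Longrightarrow> t' \<in> {0..D} \<Longrightarrow> l1dist (\<gamma> t) (\<gamma> t') = \<bar>t - t'\<bar>"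
    using assms(1) unfolding l1_geodesic_def D_def by auto
  have p_first: "p s = (\<chi> i. \<gamma> s $ i + seg_clamp (b $ i) (b' $ i) (b $ i + x $ i - \<gamma> s $ i))"
    if "s \<le> D" for s
    using that by (simp add: p_def g_def c_def h_def vec_eq_iff)
  have p_second: "p s = (x' + c D) + h s *\<^sub>R (b' - c D)" if "D \<le> s" for s
    using that \<gamma>(2) by (simp add: p_def g_def c_def algebra_simps)
  have "continuous_on {0..D} \<gamma>"
    using continuous_on_l1_isometry \<gamma>(4) by blast
  have "monotone_coords {0..D} \<gamma>"
    using monotone_coords_l1_isometry \<gamma>(4) by blast
  then have "monotone_coords {0..D} (\<lambda>s. \<chi> i. \<gamma> s $ i + seg_clamp (b $ i) (b' $ i) (b $ i + x $ i - \<gamma> s $ i))"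
    by (rule monotone_coords_mono_comp) (rule mono_add_seg_clamp)
  then have "monotone_coords {0..D} p"
    by (rule monotone_coords_cong) (simp add: p_first)
  moreover have "monotone_coords {D..D+1} p"
    by (rule monotone_coords_cong[OF monotone_coords_ray]) (auto simp: p_second h_def intro!: monotone_onI)
  moreover have "p 0 = x + b" "p D = x' + c D" "p (D + 1) = x' + b'"
    using \<open>0 \<le> D\<close> \<gamma>(1) p_first[of 0] p_second[of D] p_second[of "D + 1"]
    by (simp_all add: h_def vec_eq_iff)
  moreover have "l1dist (x + b) (x' + c D) + l1dist (x' + c D) (x' + b') = l1dist (x + b) (x' + b')"
    unfolding l1dist_add_eq_iff
    using seg_clamp_between[of "b $ _ + x $ _ - x' $ _" "b $ _" "b' $ _"] \<gamma>(2)
    by (simp add: c_def g_def algebra_simps)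
  ultimately have "monotone_coords {0..D+1} p"
    using \<open>0 \<le> D\<close> by (intro monotone_coords_glue[of 0 D p "D + 1"]) simp_all
  moreover have "continuous_on {0..D+1} p"
  proof -
    have "continuous_on {0..D+1} g"
      unfolding g_def
      by (rule continuous_on_compose2[OF \<open>continuous_on {0..D} \<gamma>\<close>])
        (auto intro!: continuous_intros simp: \<open>0 \<le> D\<close>)
    then show ?thesis
      unfolding p_def c_def h_def seg_clamp_def by (intro continuous_intros)
  qed
  moreover have "p ` {0..D+1} \<subseteq> minkowski_sum X I"
  proof (clarsimp simp: minkowski_sum_def)
    fix s assume "0 \<le> s" "s \<le> D + 1"
    then have "g s \<in> X" using \<gamma>(3) \<open>0 \<le> D\<close> by (simp add: g_def)
    moreover have "c s + h s *\<^sub>R (b' - c s) \<in> I"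
      using assms(2-4) by (rule box_interval_towards_endpoint) (auto simp: c_def h_def seg_clamp_in_closed_segment)
    ultimately show "\<exists>a b. p s = a + b \<and> a \<in> X \<and> b \<in> I"
      unfolding p_def by blast
  qed
  ultimately show ?thesis
    using l1_geodesic_monotone_path[of "D + 1" p] \<open>0 \<le> D\<close> \<open>p 0 = x + b\<close> \<open>p (D + 1) = x' + b'\<close>
    by simp
qed

theorem proposition2p3:
  fixes X I :: "(real^'n) set"
  assumes "closed X" and "l1_convex X" and "box_interval I"
  shows "l1_convex (minkowski_sum X I)"
  unfolding l1_convex_iff_l1_geodesic
proof (intro ballI)
  fix y y' assume "y \<in> minkowski_sum X I" "y' \<in> minkowski_sum X I"
  then obtain x b x' b' where "x \<in> X" "b \<in> I" "x' \<in> X" "b' \<in> I" "y = x + b" "y' = x' + b'"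
    unfolding minkowski_sum_def by blast
  moreover obtain \<gamma> where "l1_geodesic X \<gamma> x x'"
    using assms(2) \<open>x \<in> X\<close> \<open>x' \<in> X\<close> unfolding l1_convex_iff_l1_geodesic by blast
  ultimately show "\<exists>\<delta>. l1_geodesic (minkowski_sum X I) \<delta> y y'"
    using l1_geodesic_minkowski_sum_box assms(3) by blast
qed

end
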